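(* Assume $I_\delta=0$. Let $S\in\mathsf{X}$ be $\delta$-admissible and $G=\mathcal{G}(S)$. Then $$\|G\|_\infty\le C,\qquad \operatorname{supp}G\subseteq[-C\delta,C\delta],\qquad \Big|\int_{\mathbb{R}}G(x)\,dx\Big|\le C\big(1+\|S''\|_\infty\big)\delta^2$$ for a constant $C$ independent of $S$, $\delta$, $c\in[c_0,c_1]$ and $R_0\in\mathcal{R}_c$.
   Context: $\Delta_1F(x)=F(x+1)-2F(x)+F(x-1)$, $a(k)=\frac{\sin(k/2)}{k/2}$, $\Psi_0'(r)=\mathrm{sgn}(r)$. Potentials: $(\Psi_\delta)_{\delta>0}$ is a family of $C^2$ functions such that $\Psi_\delta'(r)=\mathrm{sgn}(r)$ for $r\notin(-\delta,\delta)$, and $|\Psi_\delta'|\le C_\Psi$, $|\Psi_\delta''|\le C_\Psi/\delta$ on $\mathbb{R}$ with $C_\Psi$ independent of $\delta$; $I_\delta:=\frac12\int_{\mathbb{R}}(\Psi_\delta'-\Psi_0')\,dr$. Unperturbed waves (standing hypothesis, a known result): there are constants $0<c_0<1$ and $x_0,r_0,d_0,D_0>0$ such that for every $c\in[c_0,1)$ the equation $a(k)=c$ has exactly one positive solution $k_c$, and there is a two-parameter family $\mathcal{R}_c$ of functions $R_0\in W^{2,\infty}(\mathbb{R})$ solving $c^2R_0''=\Delta_1(R_0-\mathrm{sgn}(R_0))$ with $R_0(0)=0$, given by $R_0=\bar R_0+\alpha(\cos(k_c\cdot)-1)+\beta\sin(k_c\cdot)$, $(\alpha,\beta)$ in an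 open neighbourhood $U_c$ of $0\in\mathbb{R}^2$, where $\bar R_0$ is a fixed member for which $\lim_{x\to+\infty}\bar R_0(x)$ exists and $\lim_{x\to-\infty}(\bar R_0(x)-\alpha_c^-(\cos(k_cx)-1)-\beta_c^-\sin(k_cx))$ exists for some constants $\alpha_c^-,\beta_c^-$. Every $R_0\in\mathcal{R}_c$ satisfies $\|R_0\|_\infty\le D_0(1-c^2)^{-1}$, $R_0(x)>r_0$ for $x>x_0$, $R_0(x)<-r_0$ for $x<-x_0$, $R_0'(x)>d_0$ for $|x|<x_0$. Setting: $c_1\in(c_0,1)$ fixed, $c\in[c_0,c_1]$, $R_0\in\mathcal{R}_c$ fixed. $\mathsf{X}:=\{S\in W^{2,\infty}(\mathbb{R}):S(0)=0,\ \lim_{x\to+\infty}S(x)\text{ exists}\}$. $\mathcal{G}(S)(x):=\Psi_\delta'(R_0(x)+S(x))-\Psi_0'(R_0(x))$. $S\in\mathsf{X}$ is called $\delta$-admissible if there exist $x_-<0<x_+$ with: $R_0(x_\pm)+S(x_\pm)=\pm\delta$; $R_0(x)+S(x)<-\delta$ for $x<x_-$; $R_0(x)+S(x)>\delta$ for $x>x_+$; and $\frac12R_0'(0)<R_0'(x)+S'(x)<2R_0'(0)$ for $x_-<x<x_+$. *)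

theory Defs
  imports "HOL-Analysis.Analysis"
begin

definition Delta1 :: "(real \<Rightarrow> real) \<Rightarrow> real \<Rightarrow> real" where
  "Delta1 F x = F (x + 1) - 2 * F x + F (x - 1)"

definition afun :: "real \<Rightarrow> real" where
  "afun k = sin (k / 2) / (k / 2)"

definition W2inf :: "(real \<Rightarrow> real) \<Rightarrow> bool" where
  "W2inf f \<longleftrightarrow> bounded (range f) \<and> (\<forall>x. f differentiable at x) \<and>
     bounded (range (deriv f)) \<and> (\<exists>L. \<forall>x y. \<bar>deriv f x - deriv f y\<bar> \<le> L * \<bar>x - y\<bar>)"

text \<open>The sup norm of the second derivative of a W^{2,infinity} function,
  i.e. the (smallest) Lipschitz constant of its first derivative.\<close>
definition norm2inf :: "(real \<Rightarrow> real) \<Rightarrow> real" where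
  "norm2inf f = Inf {L. 0 \<le> L \<and> (\<forall>x y. \<bar>deriv f x - deriv f y\<bar> \<le> L * \<bar>x - y\<bar>)}"

definition C2fun :: "(real \<Rightarrow> real) \<Rightarrow> bool" where
  "C2fun f \<longleftrightarrow> (\<forall>x. f differentiable at x) \<and> (\<forall>x. deriv f differentiable at x) \<and>
     continuous_on UNIV (deriv (deriv f))"

definition potential_family :: "real \<Rightarrow> (real \<Rightarrow> real \<Rightarrow> real) \<Rightarrow> bool" where
  "potential_family CPsi Psi \<longleftrightarrow> (\<forall>\<delta>>0. C2fun (Psi \<delta>) \<and>
      (\<forall>r. r \<notin> {-\<delta><..<\<delta>} \<longrightarrow> deriv (Psi \<delta>) r = sgn r) \<and>
      (\<forall>r. \<bar>deriv (Psi \<delta>) r\<bar> \<le> CPsi) \<and>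
      (\<forall>r. \<bar>deriv (deriv (Psi \<delta>)) r\<bar> \<le> CPsi / \<delta>))"

definition I_delta :: "(real \<Rightarrow> real \<Rightarrow> real) \<Rightarrow> real \<Rightarrow> real" where
  "I_delta Psi \<delta> = (1/2) * (LINT r|lborel. deriv (Psi \<delta>) r - sgn r)"

definition wave_family :: "(real \<Rightarrow> real) \<Rightarrow> (real \<Rightarrow> real \<Rightarrow> real) \<Rightarrow> (real \<Rightarrow> (real \<times> real) set)
    \<Rightarrow> real \<Rightarrow> (real \<Rightarrow> real) set" where
  "wave_family kc Rbar U c =
     {(\<lambda>x. Rbar c x + \<alpha> * (cos (kc c * x) - 1) + \<beta> * sin (kc c * x)) | \<alpha> \<beta>. (\<alpha>, \<beta>) \<in> U c}"

text \<open>The standing hypothesis on the unperturbed waves.  The equation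
  c^2 R0'' = Delta1 (R0 - sgn R0) is understood almost everywhere (R0 in W^{2,infinity}).\<close>
definition unperturbed_waves :: "real \<Rightarrow> real \<Rightarrow> real \<Rightarrow> real \<Rightarrow> real \<Rightarrow> (real \<Rightarrow> real)
    \<Rightarrow> (real \<Rightarrow> real \<Rightarrow> real) \<Rightarrow> (real \<Rightarrow> (real \<times> real) set) \<Rightarrow> bool" where
  "unperturbed_waves c0 x0 r0 d0 D0 kc Rbar U \<longleftrightarrow>
     0 < c0 \<and> c0 < 1 \<and> 0 < x0 \<and> 0 < r0 \<and> 0 < d0 \<and> 0 < D0 \<and>
     (\<forall>c\<in>{c0..<1}.
        0 < kc c \<and> afun (kc c) = c \<and> (\<forall>k>0. afun k = c \<longrightarrow> k = kc c) \<and>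
        open (U c) \<and> (0, 0) \<in> U c \<and>
        (\<exists>L. (Rbar c \<longlongrightarrow> L) at_top) \<and>
        (\<exists>\<alpha>m \<beta>m L. ((\<lambda>x. Rbar c x - \<alpha>m * (cos (kc c * x) - 1) - \<beta>m * sin (kc c * x))
                       \<longlongrightarrow> L) at_bot) \<and>
        (\<forall>R0\<in>wave_family kc Rbar U c.
           W2inf R0 \<and> R0 0 = 0 \<and>
           (AE x in lborel. (deriv R0 has_real_derivative
                 Delta1 (\<lambda>y. R0 y - sgn (R0 y)) x / c\<^sup>2) (at x)) \<and>
           (\<forall>x. \<bar>R0 x\<bar> \<le> D0 / (1 - c\<^sup>2)) \<and>
           (\<forall>x>x0. R0 x > r0) \<and> (\<forall>x< -x0. R0 x < - r0) \<and>
           (\<forall>x. \<bar>x\<bar> < x0 \<longrightarrow> deriv R0 x > d0)))"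

definition in_X :: "(real \<Rightarrow> real) \<Rightarrow> bool" where
  "in_X S \<longleftrightarrow> W2inf S \<and> S 0 = 0 \<and> (\<exists>L. (S \<longlongrightarrow> L) at_top)"

definition admissible :: "real \<Rightarrow> (real \<Rightarrow> real) \<Rightarrow> (real \<Rightarrow> real) \<Rightarrow> bool" where
  "admissible \<delta> R0 S \<longleftrightarrow> (\<exists>xm xp. xm < 0 \<and> 0 < xp \<and>
      R0 xm + S xm = - \<delta> \<and> R0 xp + S xp = \<delta> \<and>
      (\<forall>x<xm. R0 x + S x < - \<delta>) \<and> (\<forall>x>xp. R0 x + S x > \<delta>) \<and>
      (\<forall>x. xm < x \<and> x < xp \<longrightarrow>
         deriv R0 0 / 2 < deriv R0 x + deriv S x \<and> deriv R0 x + deriv S x < 2 * deriv R0 0))"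

definition Gmap :: "(real \<Rightarrow> real \<Rightarrow> real) \<Rightarrow> real \<Rightarrow> (real \<Rightarrow> real) \<Rightarrow> (real \<Rightarrow> real) \<Rightarrow> real \<Rightarrow> real" where
  "Gmap Psi \<delta> R0 S x = deriv (Psi \<delta>) (R0 x + S x) - sgn (R0 x)"

end

theory Submission
  imports Defs
begin

(*
  Proof of Lemma 3.3.  Write u = R0 + S and P = Psi_delta'.  Since R0 has the sign
  of x, the nonlinearity is G(x) = P(u x) - sgn x.  Admissibility forces u' > d0/2
  between the two points where u crosses the layer [-delta, delta], so u leaves the
  layer inside the window |x| <= K delta with K = 2/d0; outside the window
  P(u x) = sgn x, which gives the sup bound and the support bound.  For the integral
  we compare with the linearisation a x, a = u'(0): the function P(a x) - sgn x is a
  rescaling of P - sgn, whose integral is 2 I_delta = 0, whereas by first-order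
  Taylor expansion |P(u x) - P(a x)| <= (C_Psi/delta) L x^2, where L bounds the
  Lipschitz constant of u'.  Integrating over the window gives O(L delta^2).
  Here L = M + ||S''||, M being a uniform Lipschitz bound for R0' read off from the
  travelling wave equation: a Lipschitz function whose a.e. derivative is bounded
  by M is M-Lipschitz.
*)

lemma norm2inf_lipschitz:
  assumes "W2inf S"
  shows "0 \<le> norm2inf S" "\<bar>deriv S x - deriv S y\<bar> \<le> norm2inf S * \<bar>x - y\<bar>"
proof -
  let ?A = "{L. 0 \<le> L \<and> (\<forall>x y. \<bar>deriv S x - deriv S y\<bar> \<le> L * \<bar>x - y\<bar>)}"
  obtain L where L: "\<forall>x y. \<bar>deriv S x - deriv S y\<bar> \<le> L * \<bar>x - y\<bar>"
    using assms unfolding W2inf_def by blast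
  have "\<bar>deriv S x - deriv S y\<bar> \<le> max L 0 * \<bar>x - y\<bar>" for x y
    using L[rule_format, of x y] by (smt (verit) abs_ge_zero mult_right_mono max.cobounded1)
  then have "max L 0 \<in> ?A" by auto
  then have ne: "?A \<noteq> {}" by blast
  show "0 \<le> norm2inf S" unfolding norm2inf_def by (rule cInf_greatest[OF ne]) auto
  show "\<bar>deriv S x - deriv S y\<bar> \<le> norm2inf S * \<bar>x - y\<bar>"
  proof (cases "x = y")
    case False
    then have p: "\<bar>x - y\<bar> > 0" by simp
    have "\<bar>deriv S x - deriv S y\<bar> / \<bar>x - y\<bar> \<le> norm2inf S" unfolding norm2inf_def
      by (rule cInf_greatest[OF ne]) (use p in \<open>auto simp: divide_le_eq\<close>)
    then show ?thesis using p by (simp add: divide_le_eq)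
  qed simp
qed

lemma lipschitz_continuous:
  fixes g :: "real \<Rightarrow> real"
  assumes K: "\<And>x y. \<bar>g x - g y\<bar> \<le> K * \<bar>x - y\<bar>"
  shows "continuous_on UNIV g"
proof -
  have "0 \<le> K" using K[of 1 0] by simp
  then have "K-lipschitz_on UNIV g" using K by (intro lipschitz_onI) (auto simp: dist_real_def)
  then show ?thesis by (rule lipschitz_on_continuous_on)
qed

lemma last_crossing:
  fixes h :: "real \<Rightarrow> real"
  assumes h: "continuous_on UNIV h" and xy: "x \<le> y" and w: "h x \<le> w" "w < h y"
  obtains t0 where "x \<le> t0" "t0 < y" "h t0 = w" "\<And>t. t0 < t \<Longrightarrow> t \<le> y \<Longrightarrow> w < h t"
proof -
  have cont: "\<forall>t. a \<le> t \<and> t \<le> b \<longrightarrow> isCont h t" for a b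
    using h by (simp add: continuous_on_eq_continuous_at)
  define T where "T = {t \<in> {x..y}. h t = w}"
  have T_closed: "closed T" unfolding T_def
    by (rule continuous_closed_preimage_constant) (use h continuous_on_subset in auto)
  have T_bdd: "bdd_above T" unfolding T_def by (auto intro: bdd_aboveI[of _ y])
  have "\<exists>t1\<ge>x. t1 \<le> y \<and> h t1 = w" using w xy cont by (intro IVT) auto
  then have "T \<noteq> {}" unfolding T_def by auto
  then have "Sup T \<in> T" using T_closed T_bdd by (intro closed_contains_Sup)
  then have t0: "x \<le> Sup T" "Sup T \<le> y" "h (Sup T) = w" unfolding T_def by auto
  have after: "w < h t" if t: "Sup T < t" "t \<le> y" for t
  proof (rule ccontr)
    assume "\<not> w < h t"
    then have "\<exists>t2\<ge>t. t2 \<le> y \<and> h t2 = w" using w t cont by (intro IVT) auto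
    then obtain t2 where "t \<le> t2" "t2 \<in> T" using t0 t unfolding T_def by auto
    moreover have "t2 \<le> Sup T" using T_bdd \<open>t2 \<in> T\<close> by (rule cSup_upper[rotated])
    ultimately show False using t by simp
  qed
  have "Sup T \<noteq> y" using t0 w by auto
  then show ?thesis using t0 after by (intro that[of "Sup T"]) auto
qed

(* One-sided form of the next lemma, up to an arbitrary e > 0.  Argument: otherwise
   h(t) = g(t) - (M + e) t increases from x to y; Lipschitz maps preserve null sets,
   so some value w in (h x, h y) is attained only at points where g' exists and
   |g'| <= M; at the last such point h' < 0, contradicting the choice of that point. *)
lemma ae_derivative_bound_one_sided:
  fixes g :: "real \<Rightarrow> real"
  assumes K: "\<And>x y. \<bar>g x - g y\<bar> \<le> K * \<bar>x - y\<bar>"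
    and ae: "AE x in lborel. \<exists>d. (g has_real_derivative d) (at x) \<and> \<bar>d\<bar> \<le> M"
    and xy: "x < y" and e: "0 < e"
  shows "g y - g x \<le> (M + e) * (y - x)"
proof (rule ccontr)
  assume increase: "\<not> g y - g x \<le> (M + e) * (y - x)"
  define h where "h t = g t - (M + e) * t" for t
  have hxy: "h x < h y" using increase by (simp add: h_def algebra_simps)
  from AE_completion[OF ae] obtain N where
    N: "{t \<in> space (completion lborel). \<not> (\<exists>d. (g has_real_derivative d) (at t) \<and> \<bar>d\<bar> \<le> M)} \<subseteq> N"
      "emeasure (completion lborel) N = 0" "N \<in> sets (completion lborel)"
    by (rule AE_E)
  have "negligible N" unfolding negligible_iff_null_sets using N by (auto simp: null_sets_def)
  have h_lip: "\<bar>h a - h b\<bar> \<le> (K + \<bar>M + e\<bar>) * \<bar>a - b\<bar>" for a b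
  proof -
    have "\<bar>h a - h b\<bar> = \<bar>(g a - g b) - (M + e) * (a - b)\<bar>" by (simp add: h_def algebra_simps)
    also have "\<dots> \<le> \<bar>g a - g b\<bar> + \<bar>M + e\<bar> * \<bar>a - b\<bar>" by (metis abs_mult abs_triangle_ineq4)
    also have "\<dots> \<le> (K + \<bar>M + e\<bar>) * \<bar>a - b\<bar>" using K[of a b] by (simp add: distrib_right)
    finally show ?thesis .
  qed
  have "negligible (h ` N)"
    by (rule negligible_locally_Lipschitz_image[OF _ \<open>negligible N\<close>])
       (use h_lip in \<open>auto intro!: exI[of _ UNIV] exI[of _ "K + \<bar>M + e\<bar>"]\<close>)
  moreover have "\<not> negligible {h x<..<h y}" using negligible_interval(2)[of "h x" "h y"] hxy by simp
  ultimately obtain w where w: "h x < w" "w < h y" "w \<notin> h ` N"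
    using negligible_subset[of "h ` N" "{h x<..<h y}"] by (meson greaterThanLessThan_iff subsetI)
  have h_cont: "continuous_on UNIV h" unfolding h_def
    by (intro continuous_intros lipschitz_continuous[OF K])
  obtain t0 where t0: "x \<le> t0" "t0 < y" "h t0 = w" and above: "\<And>t. t0 < t \<Longrightarrow> t \<le> y \<Longrightarrow> w < h t"
    using last_crossing[OF h_cont less_imp_le[OF xy] less_imp_le[OF w(1)] w(2)] by blast
  have "t0 \<notin> N" using t0(3) w(3) by auto
  then obtain d where d: "(g has_real_derivative d) (at t0)" "\<bar>d\<bar> \<le> M" using N(1) by auto
  have "(h has_real_derivative d - (M + e)) (at t0)" unfolding h_def
    by (rule derivative_eq_intros d refl | simp)+
  moreover have "d - (M + e) < 0" using d(2) e by simp
  ultimately have "\<exists>r>0. \<forall>s>0. s < r \<longrightarrow> h t0 > h (t0 + s)" by (rule DERIV_neg_dec_right)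
  then obtain r where r: "r > 0" "\<And>s. 0 < s \<Longrightarrow> s < r \<Longrightarrow> h (t0 + s) < h t0" by blast
  define s where "s = min (r / 2) (y - t0)"
  have "0 < s" "s < r" "t0 + s \<le> y" using r(1) t0(2) by (auto simp: s_def)
  then show False using r(2) above[of "t0 + s"] t0(3) by force
qed

lemma lipschitz_from_ae_derivative_bound:
  fixes g :: "real \<Rightarrow> real"
  assumes K: "\<And>x y. \<bar>g x - g y\<bar> \<le> K * \<bar>x - y\<bar>"
    and ae: "AE x in lborel. \<exists>d. (g has_real_derivative d) (at x) \<and> \<bar>d\<bar> \<le> M"
  shows "\<bar>g x - g y\<bar> \<le> M * \<bar>x - y\<bar>"
proof -
  have K': "\<bar>- g x - - g y\<bar> \<le> K * \<bar>x - y\<bar>" for x y using K[of x y] by linarith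
  have ae': "AE x in lborel. \<exists>d. ((\<lambda>t. - g t) has_real_derivative d) (at x) \<and> \<bar>d\<bar> \<le> M"
    using ae by eventually_elim (metis DERIV_minus abs_minus_cancel)
  have ordered: "\<bar>g b - g a\<bar> \<le> M * (b - a)" if ab: "a < b" for a b
  proof (rule field_le_epsilon)
    fix e :: real assume "0 < e"
    then have e': "0 < e / (b - a)" using ab by simp
    have "(M + e / (b - a)) * (b - a) = M * (b - a) + e" using ab by (simp add: field_simps)
    then show "\<bar>g b - g a\<bar> \<le> M * (b - a) + e"
      using ae_derivative_bound_one_sided[OF K ae ab e']
        ae_derivative_bound_one_sided[OF K' ae' ab e'] by linarith
  qed
  show ?thesis
    by (cases x y rule: linorder_cases)
       (use ordered[of x y] ordered[of y x] in \<open>auto simp: abs_minus_commute\<close>)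
qed

lemma secant_lower_bound:
  fixes u u' :: "real \<Rightarrow> real"
  assumes d: "\<And>t. (u has_real_derivative u' t) (at t)"
    and s: "\<And>t. x < t \<Longrightarrow> t < y \<Longrightarrow> s < u' t" and xy: "x < y"
  shows "s * (y - x) < u y - u x"
proof -
  obtain z where "x < z" "z < y" "u y - u x = (y - x) * u' z" using MVT2[OF xy, of u u'] d by blast
  then show ?thesis using s[of z] xy by (simp add: mult.commute)
qed

lemma first_order_taylor:
  fixes u u' :: "real \<Rightarrow> real"
  assumes d: "\<And>t. (u has_real_derivative u' t) (at t)" and u0: "u 0 = 0"
    and lip: "\<And>t. \<bar>u' t - u' 0\<bar> \<le> L * \<bar>t\<bar>"
  shows "\<bar>u x - u' 0 * x\<bar> \<le> L * x\<^sup>2"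
proof -
  have L0: "0 \<le> L" using lip[of 1] by simp
  obtain z where z: "\<bar>z\<bar> \<le> \<bar>x\<bar>" "u x = x * u' z"
  proof (cases x "0::real" rule: linorder_cases)
    case less
    then obtain z where "x < z" "z < 0" "u 0 - u x = (0 - x) * u' z" using MVT2[OF less, of u u'] d by blast
    then show ?thesis using u0 that[of z] by auto
  next
    case greater
    then obtain z where "0 < z" "z < x" "u x - u 0 = (x - 0) * u' z" using MVT2[OF greater, of u u'] d by blast
    then show ?thesis using u0 that[of z] by auto
  qed (use u0 in auto)
  have "\<bar>u x - u' 0 * x\<bar> = \<bar>x\<bar> * \<bar>u' z - u' 0\<bar>" by (simp add: z(2) abs_mult[symmetric] algebra_simps)
  also have "\<dots> \<le> \<bar>x\<bar> * (L * \<bar>x\<bar>)"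
    using order_trans[OF lip[of z] mult_left_mono[OF z(1) L0]] by (simp add: mult_left_mono)
  also have "\<dots> = L * x\<^sup>2" by (simp add: power2_eq_square)
  finally show ?thesis .
qed

lemma bounded_support_integral:
  fixes g :: "real \<Rightarrow> real"
  assumes m: "g \<in> borel_measurable borel" and b: "\<And>x. \<bar>g x\<bar> \<le> B * indicator {a..b} x"
    and ab: "a \<le> b"
  shows "integrable lborel g" "\<bar>LINT x|lborel. g x\<bar> \<le> B * (b - a)"
proof -
  have box: "integrable lborel (\<lambda>x. B * indicator {a..b} x :: real)"
    by (intro integrable_mult_right integrable_real_indicator) (auto simp: emeasure_lborel_Icc_eq)
  show ig: "integrable lborel g"
    by (rule Bochner_Integration.integrable_bound[OF box]) (use m b in \<open>auto intro: order_trans[OF _ abs_ge_self]\<close>)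
  have "\<bar>LINT x|lborel. g x\<bar> \<le> (LINT x|lborel. \<bar>g x\<bar>)" by (rule integral_abs_bound)
  also have "\<dots> \<le> (LINT x|lborel. B * indicator {a..b} x)"
    by (rule integral_mono) (use ig box b in auto)
  also have "\<dots> = B * (b - a)" using ab by simp
  finally show "\<bar>LINT x|lborel. g x\<bar> \<le> B * (b - a)" .
qed

lemma profile_outside_window:
  fixes P u :: "real \<Rightarrow> real"
  assumes P_sgn: "\<And>r. \<delta> \<le> \<bar>r\<bar> \<Longrightarrow> P r = sgn r" and \<delta>: "0 < \<delta>" and K: "0 \<le> K"
    and u_right: "\<And>x. K * \<delta> < x \<Longrightarrow> \<delta> < u x"
    and u_left: "\<And>x. x < - (K * \<delta>) \<Longrightarrow> u x < - \<delta>"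
    and x: "K * \<delta> < \<bar>x\<bar>"
  shows "P (u x) = sgn x"
proof (cases "0 < x")
  case True
  then show ?thesis using u_right[of x] P_sgn[of "u x"] x \<delta> by auto
next
  case False
  have "0 \<le> K * \<delta>" using K \<delta> by simp
  with False x have "x < - (K * \<delta>)" "x < 0" by auto
  then show ?thesis using u_left[of x] P_sgn[of "u x"] \<delta> by auto
qed

lemma rescaled_profile_mean_zero:
  fixes P :: "real \<Rightarrow> real"
  assumes \<delta>: "0 < \<delta>"
    and P_sgn: "\<And>r. \<delta> \<le> \<bar>r\<bar> \<Longrightarrow> P r = sgn r"
    and P_bound: "\<And>r. \<bar>P r\<bar> \<le> B"
    and P_meas: "P \<in> borel_measurable borel"
    and P_mean: "(LINT r|lborel. P r - sgn r) = 0"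
    and a: "0 < a"
  shows "integrable lborel (\<lambda>x. P (a * x) - sgn x)" "(LINT x|lborel. P (a * x) - sgn x) = 0"
proof -
  define f where "f r = P r - sgn r" for r
  have B0: "0 \<le> B" using P_bound[of 0] by (meson abs_ge_zero order_trans)
  have f_box: "\<bar>f r\<bar> \<le> (B + 1) * indicator {-\<delta>..\<delta>} r" for r
  proof (cases "\<bar>r\<bar> \<le> \<delta>")
    case True
    have "\<bar>sgn r\<bar> \<le> (1::real)" by (simp add: sgn_if)
    then have "\<bar>f r\<bar> \<le> B + 1" using P_bound[of r] unfolding f_def by linarith
    then show ?thesis using True by (simp add: abs_le_iff)
  next
    case False
    then show ?thesis using P_sgn[of r] B0 by (simp add: f_def)
  qed
  have f_int: "integrable lborel f"
    using bounded_support_integral(1)[OF _ f_box] \<delta> P_meas unfolding f_def[abs_def] by simp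
  have rescaled: "(\<lambda>x. P (a * x) - sgn x) = (\<lambda>x. f (0 + a * x))"
    by (simp add: fun_eq_iff f_def sgn_mult a)
  show "integrable lborel (\<lambda>x. P (a * x) - sgn x)"
    unfolding rescaled using lborel_integrable_real_affine[OF f_int, of a 0] a by simp
  show "(LINT x|lborel. P (a * x) - sgn x) = 0"
    unfolding rescaled using lborel_integral_real_affine[of a f 0] a P_mean by (simp add: f_def)
qed

(* Linearisation error inside the transition layer: if u' is L-Lipschitz at 0 and
   a = u'(0) >= 1/K, then P(u x) - P(a x) is at most Lambda L (K delta)^2 on the window
   and vanishes outside it, since both u x and a x have left the layer there. *)
lemma linearisation_error:
  fixes P u u' :: "real \<Rightarrow> real"
  assumes \<delta>: "0 < \<delta>" and K: "0 < K"
    and P_sgn: "\<And>r. \<delta> \<le> \<bar>r\<bar> \<Longrightarrow> P r = sgn r"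
    and P_lip: "\<And>p q. \<bar>P p - P q\<bar> \<le> \<Lambda> * \<bar>p - q\<bar>"
    and u_deriv: "\<And>t. (u has_real_derivative u' t) (at t)" and u0: "u 0 = 0"
    and u'_lip: "\<And>t. \<bar>u' t - u' 0\<bar> \<le> L * \<bar>t\<bar>"
    and slope: "1 / K \<le> u' 0"
    and u_right: "\<And>x. K * \<delta> < x \<Longrightarrow> \<delta> < u x"
    and u_left: "\<And>x. x < - (K * \<delta>) \<Longrightarrow> u x < - \<delta>"
  shows "\<bar>P (u x) - P (u' 0 * x)\<bar> \<le> (\<Lambda> * L * (K * \<delta>)\<^sup>2) * indicator {-(K * \<delta>)..K * \<delta>} x"
proof (cases "\<bar>x\<bar> \<le> K * \<delta>")
  case True
  have L0: "0 \<le> L" using u'_lip[of 1] by simp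
  have \<Lambda>0: "0 \<le> \<Lambda>" using P_lip[of 1 0] by simp
  have "\<bar>P (u x) - P (u' 0 * x)\<bar> \<le> \<Lambda> * \<bar>u x - u' 0 * x\<bar>" by (rule P_lip)
  also have "\<dots> \<le> \<Lambda> * (L * x\<^sup>2)"
    using first_order_taylor[OF u_deriv u0 u'_lip, of x] \<Lambda>0 by (intro mult_left_mono) auto
  also have "\<dots> \<le> \<Lambda> * (L * (K * \<delta>)\<^sup>2)"
    using True K \<delta> \<Lambda>0 L0 abs_le_square_iff[of x "K * \<delta>"] by (intro mult_left_mono) auto
  finally show ?thesis using True by (simp add: abs_le_iff mult.assoc)
next
  case False
  have linear_right: "\<delta> < u' 0 * y" if "K * \<delta> < y" for y
  proof -
    have "\<delta> < (1 / K) * y" using that K by (simp add: field_simps)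
    also have "\<dots> \<le> u' 0 * y"
      using slope that mult_pos_pos[OF K \<delta>] by (intro mult_right_mono) auto
    finally show ?thesis .
  qed
  have linear_left: "u' 0 * y < - \<delta>" if "y < - (K * \<delta>)" for y
    using linear_right[of "- y"] that by simp
  from False have "P (u x) = sgn x" "P (u' 0 * x) = sgn x"
    using profile_outside_window[where u = u and K = K, OF P_sgn \<delta> _ u_right u_left]
      profile_outside_window[where u = "\<lambda>y. u' 0 * y" and K = K, OF P_sgn \<delta> _ linear_right linear_left]
      K by auto
  moreover have "0 \<le> L" "0 \<le> \<Lambda>" using u'_lip[of 1] P_lip[of 1 0] by simp_all
  ultimately show ?thesis by simp
qed

(* Splitting P(u x) - sgn x = (P(u x) - P(a x)) + (P(a x) - sgn x) with
   a = u'(0), the second term has integral zero and the first is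
   O(Lambda L (K delta)^2) on a window of length 2 K delta. *)
lemma transition_profile_integral:
  fixes P u u' :: "real \<Rightarrow> real"
  assumes \<delta>: "0 < \<delta>" and K: "0 < K"
    and P_sgn: "\<And>r. \<delta> \<le> \<bar>r\<bar> \<Longrightarrow> P r = sgn r"
    and P_bound: "\<And>r. \<bar>P r\<bar> \<le> B"
    and P_lip: "\<And>p q. \<bar>P p - P q\<bar> \<le> \<Lambda> * \<bar>p - q\<bar>"
    and P_mean: "(LINT r|lborel. P r - sgn r) = 0"
    and u_deriv: "\<And>t. (u has_real_derivative u' t) (at t)" and u0: "u 0 = 0"
    and u'_lip: "\<And>t. \<bar>u' t - u' 0\<bar> \<le> L * \<bar>t\<bar>"
    and slope: "1 / K \<le> u' 0"
    and u_right: "\<And>x. K * \<delta> < x \<Longrightarrow> \<delta> < u x"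
    and u_left: "\<And>x. x < - (K * \<delta>) \<Longrightarrow> u x < - \<delta>"
  shows "integrable lborel (\<lambda>x. P (u x) - sgn x)"
    and "\<bar>LINT x|lborel. P (u x) - sgn x\<bar> \<le> 2 * \<Lambda> * L * K ^ 3 * \<delta> ^ 3"
proof -
  define a where "a = u' 0"
  have a: "0 < a" using slope K unfolding a_def by (meson order_less_le_trans zero_less_divide_1_iff)
  have [measurable]: "P \<in> borel_measurable borel"
    using P_lip by (intro borel_measurable_continuous_onI lipschitz_continuous)
  have [measurable]: "u \<in> borel_measurable borel"
    using u_deriv by (intro borel_measurable_continuous_onI continuous_at_imp_continuous_on)
      (auto intro: DERIV_isCont)
  note mean_zero = rescaled_profile_mean_zero[OF \<delta> P_sgn P_bound _ P_mean a]
  define H where "H x = P (u x) - P (a * x)" for x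
  have "integrable lborel H"
    and H_est: "\<bar>LINT x|lborel. H x\<bar> \<le> \<Lambda> * L * (K * \<delta>)\<^sup>2 * (K * \<delta> - - (K * \<delta>))"
    using bounded_support_integral[OF _ linearisation_error[OF \<delta> K P_sgn P_lip u_deriv u0 u'_lip slope u_right u_left]]
      K \<delta> unfolding H_def[abs_def] a_def by simp_all
  moreover have split: "(\<lambda>x. P (u x) - sgn x) = (\<lambda>x. H x + (P (a * x) - sgn x))"
    by (simp add: fun_eq_iff H_def)
  ultimately show "integrable lborel (\<lambda>x. P (u x) - sgn x)"
    using mean_zero(1) by (simp add: Bochner_Integration.integrable_add)
  have "(LINT x|lborel. P (u x) - sgn x) = (LINT x|lborel. H x)"
    unfolding split using \<open>integrable lborel H\<close> mean_zero by simp
  with H_est show "\<bar>LINT x|lborel. P (u x) - sgn x\<bar> \<le> 2 * \<Lambda> * L * K ^ 3 * \<delta> ^ 3"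
    by (simp add: power2_eq_square power3_eq_cube algebra_simps)
qed

lemma wave_sign:
  fixes R0 :: "real \<Rightarrow> real"
  assumes dR: "\<And>x. (R0 has_real_derivative deriv R0 x) (at x)" and R00: "R0 0 = 0"
    and slope: "\<And>x. \<bar>x\<bar> < x0 \<Longrightarrow> d0 < deriv R0 x" and d0: "0 \<le> d0"
    and right: "\<And>x. x0 < x \<Longrightarrow> r0 < R0 x" and left: "\<And>x. x < - x0 \<Longrightarrow> R0 x < - r0"
    and r0: "0 \<le> r0"
  shows "sgn (R0 x) = sgn x"
proof (cases x "0::real" rule: linorder_cases)
  case less
  have "R0 x < 0"
  proof (cases "x < - x0")
    case False
    then have "d0 * (0 - x) < R0 0 - R0 x"
      by (intro secant_lower_bound[OF dR _ less] slope) auto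
    moreover have "0 \<le> d0 * (0 - x)" using d0 less by (intro mult_nonneg_nonneg) auto
    ultimately show ?thesis using R00 by linarith
  qed (use left r0 in force)
  then show ?thesis using less by simp
next
  case greater
  have "0 < R0 x"
  proof (cases "x0 < x")
    case False
    then have "d0 * (x - 0) < R0 x - R0 0"
      by (intro secant_lower_bound[OF dR _ greater] slope) auto
    moreover have "0 \<le> d0 * (x - 0)" using d0 greater by (intro mult_nonneg_nonneg) auto
    ultimately show ?thesis using R00 by linarith
  qed (use right r0 in force)
  then show ?thesis using greater by simp
qed (simp add: R00)

(* Uniform Lipschitz bound for R0' on c in [c0, c1]: by the travelling wave equation
   c^2 R0'' = Delta1 (R0 - sgn R0) a.e. and |R0 - sgn R0| <= D0/(1 - c1^2) + 1, the
   a.e. derivative of R0' is bounded by 4 (D0/(1 - c1^2) + 1)/c0^2. *)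
lemma wave_derivative_lipschitz:
  fixes R0 :: "real \<Rightarrow> real"
  assumes WR: "W2inf R0"
    and ode: "AE x in lborel. (deriv R0 has_real_derivative Delta1 (\<lambda>y. R0 y - sgn (R0 y)) x / c\<^sup>2) (at x)"
    and bound: "\<And>x. \<bar>R0 x\<bar> \<le> D0 / (1 - c\<^sup>2)"
    and c: "0 < c0" "c0 \<le> c" "c \<le> c1" "c1 < 1" and D0: "0 \<le> D0"
  shows "\<bar>deriv R0 x - deriv R0 y\<bar> \<le> 4 * (D0 / (1 - c1\<^sup>2) + 1) / c0\<^sup>2 * \<bar>x - y\<bar>"
proof -
  define B where "B = D0 / (1 - c1\<^sup>2) + 1"
  have c2: "c0\<^sup>2 \<le> c\<^sup>2" "c\<^sup>2 \<le> c1\<^sup>2" using c by (auto intro: power_mono)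
  have "0 < 1 - c1\<^sup>2" using c by (simp add: power_less_one_iff abs_less_iff)
  then have "D0 / (1 - c\<^sup>2) \<le> D0 / (1 - c1\<^sup>2)" using c2 D0 by (intro divide_left_mono) auto
  moreover have "\<bar>sgn (R0 y)\<bar> \<le> (1::real)" for y by (simp add: sgn_if)
  ultimately have F_bound: "\<bar>R0 y - sgn (R0 y)\<bar> \<le> B" for y
    using bound[of y] unfolding B_def by (smt (verit))
  have "0 \<le> B" using F_bound[of 0] by linarith
  have second_derivative_bound: "\<bar>Delta1 (\<lambda>y. R0 y - sgn (R0 y)) t / c\<^sup>2\<bar> \<le> 4 * B / c0\<^sup>2" for t
  proof -
    have "\<bar>Delta1 (\<lambda>y. R0 y - sgn (R0 y)) t\<bar> \<le> 4 * B"
      using F_bound[of "t + 1"] F_bound[of t] F_bound[of "t - 1"]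
      unfolding Delta1_def by (simp add: abs_le_iff)
    then have "\<bar>Delta1 (\<lambda>y. R0 y - sgn (R0 y)) t\<bar> / c\<^sup>2 \<le> 4 * B / c\<^sup>2"
      using c by (intro divide_right_mono) auto
    also have "\<dots> \<le> 4 * B / c0\<^sup>2" using c2 c \<open>0 \<le> B\<close> by (intro divide_left_mono) auto
    finally show ?thesis by (simp add: abs_div)
  qed
  obtain L where L: "\<forall>x y. \<bar>deriv R0 x - deriv R0 y\<bar> \<le> L * \<bar>x - y\<bar>"
    using WR unfolding W2inf_def by blast
  have "AE x in lborel. \<exists>d. (deriv R0 has_real_derivative d) (at x) \<and> \<bar>d\<bar> \<le> 4 * B / c0\<^sup>2"
    using ode by eventually_elim (use second_derivative_bound in blast)
  from lipschitz_from_ae_derivative_bound[OF L[rule_format] this] show ?thesis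
    unfolding B_def by simp
qed

(* For admissible S, the sum u = R0 + S is steep at 0 and leaves the layer
   [-delta, delta] within the window |x| <= (2/d0) delta, provided R0'(0) > d0 > 0:
   indeed u' > d0/2 between the two crossing points x_- and x_+. *)
lemma admissible_window:
  fixes R0 S :: "real \<Rightarrow> real"
  assumes du: "\<And>x. ((\<lambda>x. R0 x + S x) has_real_derivative deriv R0 x + deriv S x) (at x)"
    and u0: "R0 0 + S 0 = 0" and d0: "0 < d0" "d0 < deriv R0 0"
    and adm: "admissible \<delta> R0 S"
  shows "d0 / 2 < deriv R0 0 + deriv S 0"
    and "\<And>x. 2 / d0 * \<delta> < x \<Longrightarrow> \<delta> < R0 x + S x"
    and "\<And>x. x < - (2 / d0 * \<delta>) \<Longrightarrow> R0 x + S x < - \<delta>"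
proof -
  obtain xm xp where xm: "xm < 0" "R0 xm + S xm = - \<delta>" "\<forall>x<xm. R0 x + S x < - \<delta>"
    and xp: "0 < xp" "R0 xp + S xp = \<delta>" "\<forall>x>xp. R0 x + S x > \<delta>"
    and between: "\<forall>x. xm < x \<and> x < xp \<longrightarrow> deriv R0 0 / 2 < deriv R0 x + deriv S x"
    using adm unfolding admissible_def by blast
  have steep: "d0 / 2 < deriv R0 x + deriv S x" if "xm < x" "x < xp" for x
    using between that d0 by force
  show "d0 / 2 < deriv R0 0 + deriv S 0" using steep xm xp by simp
  have "d0 / 2 * (xp - 0) < (R0 xp + S xp) - (R0 0 + S 0)"
    using secant_lower_bound[OF du, where x=0 and y=xp and s="d0 / 2"] steep xm xp by simp
  then have "xp < 2 / d0 * \<delta>" using xp u0 d0 by (simp add: field_simps)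
  then show "\<delta> < R0 x + S x" if "2 / d0 * \<delta> < x" for x using xp(3) that by simp
  have "d0 / 2 * (0 - xm) < (R0 0 + S 0) - (R0 xm + S xm)"
    using secant_lower_bound[OF du, where x=xm and y=0 and s="d0 / 2"] steep xm xp by simp
  then have "- (2 / d0 * \<delta>) < xm" using xm u0 d0 by (simp add: field_simps)
  then show "R0 x + S x < - \<delta>" if "x < - (2 / d0 * \<delta>)" for x using xm(3) that by simp
qed

lemma unperturbed_wave_properties:
  assumes "unperturbed_waves c0 x0 r0 d0 D0 kc Rbar U"
    and "c0 \<le> c" "c < 1" "R0 \<in> wave_family kc Rbar U c"
  shows "W2inf R0" "R0 0 = 0"
    and "AE x in lborel. (deriv R0 has_real_derivative Delta1 (\<lambda>y. R0 y - sgn (R0 y)) x / c\<^sup>2) (at x)"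
    and "\<And>x. \<bar>R0 x\<bar> \<le> D0 / (1 - c\<^sup>2)"
    and "\<And>x. x0 < x \<Longrightarrow> r0 < R0 x" "\<And>x. x < - x0 \<Longrightarrow> R0 x < - r0"
    and "\<And>x. \<bar>x\<bar> < x0 \<Longrightarrow> d0 < deriv R0 x"
  using assms unfolding unperturbed_waves_def by auto

lemma potential_properties:
  assumes "potential_family CPsi Psi" and \<delta>: "0 < \<delta>"
  shows "\<And>r. \<delta> \<le> \<bar>r\<bar> \<Longrightarrow> deriv (Psi \<delta>) r = sgn r"
    and "\<And>r. \<bar>deriv (Psi \<delta>) r\<bar> \<le> CPsi"
    and "\<And>p q. \<bar>deriv (Psi \<delta>) p - deriv (Psi \<delta>) q\<bar> \<le> CPsi / \<delta> * \<bar>p - q\<bar>"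
proof -
  have C2: "C2fun (Psi \<delta>)" and sgn_out: "\<And>r. r \<notin> {-\<delta><..<\<delta>} \<Longrightarrow> deriv (Psi \<delta>) r = sgn r"
    and bound2: "\<And>r. \<bar>deriv (deriv (Psi \<delta>)) r\<bar> \<le> CPsi / \<delta>"
    using assms unfolding potential_family_def by auto
  show "\<bar>deriv (Psi \<delta>) r\<bar> \<le> CPsi" for r using assms unfolding potential_family_def by auto
  show "deriv (Psi \<delta>) r = sgn r" if "\<delta> \<le> \<bar>r\<bar>" for r
    using sgn_out[of r] that by (auto simp: abs_if split: if_splits)
  have "(deriv (Psi \<delta>) has_field_derivative deriv (deriv (Psi \<delta>)) z) (at z within UNIV)" for z
    using C2 by (simp add: C2fun_def DERIV_deriv_iff_real_differentiable)
  then show "\<bar>deriv (Psi \<delta>) p - deriv (Psi \<delta>) q\<bar> \<le> CPsi / \<delta> * \<bar>p - q\<bar>" for p q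
    using field_differentiable_bound[OF convex_UNIV, of "deriv (Psi \<delta>)" "deriv (deriv (Psi \<delta>))"
        "CPsi / \<delta>" p q] bound2 by simp
qed

lemma gmap_estimates:
  fixes Psi :: "real \<Rightarrow> real \<Rightarrow> real" and R0 S :: "real \<Rightarrow> real"
  assumes \<delta>: "0 < \<delta>" and I0: "I_delta Psi \<delta> = 0" and Psi: "potential_family CPsi Psi"
    and WR: "W2inf R0" and R00: "R0 0 = 0"
    and R0_lip: "\<And>x y. \<bar>deriv R0 x - deriv R0 y\<bar> \<le> M * \<bar>x - y\<bar>"
    and right: "\<And>x. x0 < x \<Longrightarrow> r0 < R0 x" and left: "\<And>x. x < - x0 \<Longrightarrow> R0 x < - r0"
    and slope: "\<And>x. \<bar>x\<bar> < x0 \<Longrightarrow> d0 < deriv R0 x"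
    and x0: "0 < x0" and r0: "0 \<le> r0" and d0: "0 < d0"
    and XS: "in_X S" and adm: "admissible \<delta> R0 S"
  shows "\<bar>Gmap Psi \<delta> R0 S x\<bar> \<le> CPsi + 1"
    and "closure {x. Gmap Psi \<delta> R0 S x \<noteq> 0} \<subseteq> {- (2 / d0 * \<delta>) .. 2 / d0 * \<delta>}"
    and "integrable lborel (Gmap Psi \<delta> R0 S)"
    and "\<bar>LINT x|lborel. Gmap Psi \<delta> R0 S x\<bar> \<le> 2 * CPsi * (2 / d0) ^ 3 * (M + norm2inf S) * \<delta>\<^sup>2"
proof -
  define P where "P = deriv (Psi \<delta>)"
  define K where "K = 2 / d0"
  have K: "0 < K" using d0 by (simp add: K_def)
  have P_sgn: "\<And>r. \<delta> \<le> \<bar>r\<bar> \<Longrightarrow> P r = sgn r" and P_bound: "\<And>r. \<bar>P r\<bar> \<le> CPsi"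
    and P_lip: "\<And>p q. \<bar>P p - P q\<bar> \<le> CPsi / \<delta> * \<bar>p - q\<bar>"
    using potential_properties[OF Psi \<delta>] unfolding P_def by auto
  have WS: "W2inf S" "S 0 = 0" using XS by (auto simp: in_X_def)
  have dR: "(R0 has_real_derivative deriv R0 x) (at x)" for x
    using WR by (simp add: W2inf_def DERIV_deriv_iff_real_differentiable)
  have dS: "(S has_real_derivative deriv S x) (at x)" for x
    using WS by (simp add: W2inf_def DERIV_deriv_iff_real_differentiable)
  have du: "((\<lambda>x. R0 x + S x) has_real_derivative deriv R0 x + deriv S x) (at x)" for x
    by (intro DERIV_add dR dS)
  have u0: "R0 0 + S 0 = 0" using R00 WS by simp
  have G_eq: "Gmap Psi \<delta> R0 S = (\<lambda>x. P (R0 x + S x) - sgn x)"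
    using wave_sign[OF dR R00 slope less_imp_le[OF d0] right left r0]
    by (simp add: fun_eq_iff Gmap_def P_def)
  have window: "1 / K \<le> deriv R0 0 + deriv S 0"
    "\<And>x. K * \<delta> < x \<Longrightarrow> \<delta> < R0 x + S x" "\<And>x. x < - (K * \<delta>) \<Longrightarrow> R0 x + S x < - \<delta>"
    using admissible_window[OF du u0 d0 _ adm] slope[of 0] x0 unfolding K_def by auto
  have u'_lip: "\<bar>(deriv R0 t + deriv S t) - (deriv R0 0 + deriv S 0)\<bar> \<le> (M + norm2inf S) * \<bar>t\<bar>" for t
  proof -
    have "\<bar>(deriv R0 t + deriv S t) - (deriv R0 0 + deriv S 0)\<bar>
        = \<bar>(deriv R0 t - deriv R0 0) + (deriv S t - deriv S 0)\<bar>" by (simp add: algebra_simps)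
    also have "\<dots> \<le> \<bar>deriv R0 t - deriv R0 0\<bar> + \<bar>deriv S t - deriv S 0\<bar>" by (rule abs_triangle_ineq)
    also have "\<dots> \<le> (M + norm2inf S) * \<bar>t\<bar>"
      using R0_lip[of t 0] norm2inf_lipschitz(2)[OF WS(1), of t 0] by (simp add: distrib_right)
    finally show ?thesis .
  qed
  have P_mean: "(LINT r|lborel. P r - sgn r) = 0" using I0 by (simp add: I_delta_def P_def)
  note profile = transition_profile_integral[where u = "\<lambda>x. R0 x + S x",
      OF \<delta> K P_sgn P_bound P_lip P_mean du u0 u'_lip window]
  have vanish: "P (R0 x + S x) - sgn x = 0" if "K * \<delta> < \<bar>x\<bar>" for x
    using profile_outside_window[where u = "\<lambda>x. R0 x + S x" and K = K,
        OF P_sgn \<delta> _ window(2,3)] K that by simp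
  show "\<bar>Gmap Psi \<delta> R0 S x\<bar> \<le> CPsi + 1"
  proof -
    have "\<bar>sgn x\<bar> \<le> (1::real)" by (simp add: sgn_if)
    then show ?thesis
      using P_bound[of "R0 x + S x"] abs_triangle_ineq4[of "P (R0 x + S x)" "sgn x"]
      unfolding G_eq by linarith
  qed
  show "closure {x. Gmap Psi \<delta> R0 S x \<noteq> 0} \<subseteq> {- (2 / d0 * \<delta>) .. 2 / d0 * \<delta>}"
    by (rule closure_minimal) (use vanish in \<open>force simp: G_eq K_def abs_le_iff not_less\<close>)+
  show "integrable lborel (Gmap Psi \<delta> R0 S)" unfolding G_eq by (rule profile(1))
  have "2 * (CPsi / \<delta>) * (M + norm2inf S) * K ^ 3 * \<delta> ^ 3 = 2 * CPsi * K ^ 3 * (M + norm2inf S) * \<delta>\<^sup>2"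
    using \<delta> by (simp add: power2_eq_square power3_eq_cube)
  with profile(2) show "\<bar>LINT x|lborel. Gmap Psi \<delta> R0 S x\<bar> \<le> 2 * CPsi * (2 / d0) ^ 3 * (M + norm2inf S) * \<delta>\<^sup>2"
    unfolding G_eq K_def by simp
qed

lemma absorb_constants:
  fixes G :: "real \<Rightarrow> real"
  assumes bound: "\<And>x. \<bar>G x\<bar> \<le> B"
    and supp: "closure {x. G x \<noteq> 0} \<subseteq> {- (K * \<delta>) .. K * \<delta>}"
    and int: "integrable lborel G"
    and est: "\<bar>LINT x|lborel. G x\<bar> \<le> A * (M + n) * \<delta>\<^sup>2"
    and C: "B \<le> C" "K \<le> C" "A * (M + 1) \<le> C"
    and pos: "0 < \<delta>" "0 \<le> A" "0 \<le> M" "0 \<le> n"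
  shows "(\<forall>x. \<bar>G x\<bar> \<le> C) \<and> closure {x. G x \<noteq> 0} \<subseteq> {- C * \<delta> .. C * \<delta>} \<and>
    integrable lborel G \<and> \<bar>LINT x|lborel. G x\<bar> \<le> C * (1 + n) * \<delta>\<^sup>2"
proof (intro conjI allI int)
  show "\<bar>G x\<bar> \<le> C" for x using bound[of x] C(1) by linarith
  have "K * \<delta> \<le> C * \<delta>" using C(2) pos(1) by (intro mult_right_mono) auto
  then show "closure {x. G x \<noteq> 0} \<subseteq> {- C * \<delta> .. C * \<delta>}" using supp by auto
  have "A * (M + n) \<le> A * (M + 1) * (1 + n)"
    using mult_left_mono[of "M + n" "(M + 1) * (1 + n)" A] pos by (simp add: algebra_simps)
  also have "\<dots> \<le> C * (1 + n)" using C(3) pos by (intro mult_right_mono) auto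
  finally have "A * (M + n) * \<delta>\<^sup>2 \<le> C * (1 + n) * \<delta>\<^sup>2" by (rule mult_right_mono) simp
  then show "\<bar>LINT x|lborel. G x\<bar> \<le> C * (1 + n) * \<delta>\<^sup>2" using est by linarith
qed

theorem lemma3p3:
  fixes c0 c1 x0 r0 d0 D0 CPsi :: real
    and kc :: "real \<Rightarrow> real" and Rbar :: "real \<Rightarrow> real \<Rightarrow> real"
    and U :: "real \<Rightarrow> (real \<times> real) set" and Psi :: "real \<Rightarrow> real \<Rightarrow> real"
  assumes "unperturbed_waves c0 x0 r0 d0 D0 kc Rbar U"
    and "potential_family CPsi Psi"
    and "c0 < c1" and "c1 < 1"
  shows "\<exists>C. \<forall>\<delta>>0. I_delta Psi \<delta> = 0 \<longrightarrow>
           (\<forall>c\<in>{c0..c1}. \<forall>R0\<in>wave_family kc Rbar U c. \<forall>S.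
              in_X S \<and> admissible \<delta> R0 S \<longrightarrow>
                (\<forall>x. \<bar>Gmap Psi \<delta> R0 S x\<bar> \<le> C) \<and>
                closure {x. Gmap Psi \<delta> R0 S x \<noteq> 0} \<subseteq> {- C * \<delta> .. C * \<delta>} \<and>
                integrable lborel (Gmap Psi \<delta> R0 S) \<and>
                \<bar>LINT x|lborel. Gmap Psi \<delta> R0 S x\<bar> \<le> C * (1 + norm2inf S) * \<delta>\<^sup>2)"
proof -
  have c0: "0 < c0" and x0: "0 < x0" and r0: "0 \<le> r0" and d0: "0 < d0" and D0: "0 \<le> D0"
    using assms(1) unfolding unperturbed_waves_def by auto
  have CPsi: "0 \<le> CPsi" using potential_properties(2)[OF assms(2), of 1 0] by linarith
  define M where "M = 4 * (D0 / (1 - c1\<^sup>2) + 1) / c0\<^sup>2"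
  define A where "A = 2 * CPsi * (2 / d0) ^ 3"
  define C where "C = CPsi + 1 + 2 / d0 + A * (M + 1)"
  have "c1\<^sup>2 < 1\<^sup>2" using assms(3,4) c0 by (intro power_strict_mono) auto
  then have M: "0 \<le> M" using D0 by (simp add: M_def)
  have A: "0 \<le> A" using CPsi d0 by (simp add: A_def)
  then have "0 \<le> A * (M + 1)" "0 < 2 / d0" using M d0 by simp_all
  then have C: "CPsi + 1 \<le> C" "2 / d0 \<le> C" "A * (M + 1) \<le> C" using CPsi by (auto simp: C_def)
  show ?thesis
  proof (intro exI[of _ C] allI impI ballI)
    fix \<delta> c R0 S
    assume \<delta>: "0 < \<delta>" and I0: "I_delta Psi \<delta> = 0" and c: "c \<in> {c0..c1}"
      and R0: "R0 \<in> wave_family kc Rbar U c" and S: "in_X S \<and> admissible \<delta> R0 S"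
    have "c0 \<le> c" "c < 1" using c assms(4) by auto
    note wave = unperturbed_wave_properties[OF assms(1) this R0]
    have R0_lip: "\<bar>deriv R0 x - deriv R0 y\<bar> \<le> M * \<bar>x - y\<bar>" for x y
      using wave_derivative_lipschitz[OF wave(1,3,4) c0] c assms(4) D0 unfolding M_def by auto
    note est = gmap_estimates[OF \<delta> I0 assms(2) wave(1,2) R0_lip wave(5,6,7) x0 r0 d0
        conjunct1[OF S] conjunct2[OF S], folded A_def]
    have "0 \<le> norm2inf S" using S norm2inf_lipschitz(1) by (auto simp: in_X_def)
    from absorb_constants[OF est C \<delta> A M this]
    show "(\<forall>x. \<bar>Gmap Psi \<delta> R0 S x\<bar> \<le> C) \<and>
        closure {x. Gmap Psi \<delta> R0 S x \<noteq> 0} \<subseteq> {- C * \<delta> .. C * \<delta>} \<and>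
        integrable lborel (Gmap Psi \<delta> R0 S) \<and>
        \<bar>LINT x|lborel. Gmap Psi \<delta> R0 S x\<bar> \<le> C * (1 + norm2inf S) * \<delta>\<^sup>2" .
  qed
qed

end
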